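(* Let $X$ be a nonempty compact metric space and $\Theta$ a complete tree system of peripheral extensions of $X$. Each point of $P_\Theta$ is isolated in the wedge $\vee\Theta$. In particular $P_\Theta$ is open in $\vee\Theta$, and $\vee\Theta\setminus P_\Theta$ is a compact metrizable space.
   Context: A peripheral extension of $X$ is a compact metric space $\ddot X$ containing a countably infinite discrete open dense subset $P$ with $\ddot X\setminus P\cong X$. Let $T$ be the countable tree with every vertex of infinite valence, $N_t$ the set of oriented edges starting at $t\in V_T$. A complete tree system $\Theta$ consists of, for each $t\in V_T$, a copy $X_t$ of $X$ with a peripheral extension $\ddot X_t$ and peripheral set $P_t$, and a bijection $b_t:N_t\to P_t$. For a finite subtree $F$, $\vee_F\Theta$ is the quotient of $\bigsqcup_{t\in V_F}\ddot X_t$ by $b_t([t,s])\sim b_s([s,t])$ for edges $[t,s]$ of $F$. For finite subtrees $F'\subset F$, $\rho_{F,F'}:\vee_F\Theta\to\vee_{F'}\Theta$ is the identity on $\vee_{F'}\Theta$ and maps $x\in\ddot X_s$, $s\in V_F\setminus V_{F'}$, to $b_t([t,t'])$, where $t$ is the vertex of $F'$ nearest to $s$ and $t'$ the neighbour of $t$ toward $s$. The wedge $\vee\Theta$ is the inverse limit of $(\vee_F\Theta,\rho_{F,F'})$ over finite subtrees. For each edge $e=[t,t']$ the points $b_t([t,t'])$ and $b_{t'}([t',t])$ define one point $p_{|e|}\in\vee\Theta$, and $P_\Theta=\{p_{|e|}\}$. *)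

theory Defs
  imports "HOL-Analysis.Analysis"
begin

definition quotient_topology :: "'a topology \<Rightarrow> ('a \<Rightarrow> 'b) \<Rightarrow> 'b topology" where
  "quotient_topology X f =
     topology (\<lambda>U. U \<subseteq> f ` topspace X \<and> openin X {x \<in> topspace X. f x \<in> U})"

definition peripheral_extension :: "'a topology \<Rightarrow> 'b topology \<Rightarrow> 'b set \<Rightarrow> bool" where
  "peripheral_extension X XX P \<longleftrightarrow>
     compact_space XX \<and> metrizable_space XX \<and>
     P \<subseteq> topspace XX \<and> countable P \<and> infinite P \<and>
     subtopology XX P = discrete_topology P \<and>
     openin XX P \<and> XX closure_of P = topspace XX \<and>
     subtopology XX (topspace XX - P) homeomorphic_space X"

definition walk :: "('v \<Rightarrow> 'v \<Rightarrow> bool) \<Rightarrow> 'v list \<Rightarrow> bool" where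
  "walk E xs \<longleftrightarrow> xs \<noteq> [] \<and> successively E xs"

definition is_tree :: "'v set \<Rightarrow> ('v \<Rightarrow> 'v \<Rightarrow> bool) \<Rightarrow> bool" where
  "is_tree V E \<longleftrightarrow>
     V \<noteq> {} \<and>
     (\<forall>x y. E x y \<longrightarrow> x \<in> V \<and> y \<in> V) \<and>
     (\<forall>x y. E x y \<longrightarrow> E y x) \<and> (\<forall>x. \<not> E x x) \<and>
     (\<forall>u\<in>V. \<forall>v\<in>V. \<exists>xs. walk E xs \<and> hd xs = u \<and> last xs = v) \<and>
     \<not> (\<exists>xs. walk E xs \<and> distinct xs \<and> length xs \<ge> 3 \<and> E (last xs) (hd xs))"

definition infinite_valence_tree :: "'v set \<Rightarrow> ('v \<Rightarrow> 'v \<Rightarrow> bool) \<Rightarrow> bool" where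
  "infinite_valence_tree V E \<longleftrightarrow>
     is_tree V E \<and> countable V \<and> (\<forall>v\<in>V. infinite {w. E v w})"

text \<open>Finite subtrees, identified with their (nonempty, finite, connected) vertex sets;
  a subtree of a tree contains every tree edge between its vertices.\<close>
definition fsubtree :: "'v set \<Rightarrow> ('v \<Rightarrow> 'v \<Rightarrow> bool) \<Rightarrow> 'v set \<Rightarrow> bool" where
  "fsubtree V E F \<longleftrightarrow> F \<subseteq> V \<and> finite F \<and> F \<noteq> {} \<and>
     (\<forall>u\<in>F. \<forall>v\<in>F. \<exists>xs. walk E xs \<and> hd xs = u \<and> last xs = v \<and> set xs \<subseteq> F)"

text \<open>The oriented edge [t,s] starting at t is identified with its endpoint s;
  b t is the bijection N_t \<rightarrow> P_t.\<close>
definition complete_tree_system ::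
  "'v set \<Rightarrow> ('v \<Rightarrow> 'v \<Rightarrow> bool) \<Rightarrow> 'a topology \<Rightarrow> ('v \<Rightarrow> 'b topology) \<Rightarrow> ('v \<Rightarrow> 'b set)
    \<Rightarrow> ('v \<Rightarrow> 'v \<Rightarrow> 'b) \<Rightarrow> bool" where
  "complete_tree_system V E X XX P b \<longleftrightarrow>
     infinite_valence_tree V E \<and>
     (\<forall>t\<in>V. peripheral_extension X (XX t) (P t) \<and> bij_betw (b t) {s. E t s} (P t))"

definition glued :: "('v \<Rightarrow> 'v \<Rightarrow> bool) \<Rightarrow> ('v \<Rightarrow> 'v \<Rightarrow> 'b) \<Rightarrow> 'v set \<Rightarrow> 'v \<times> 'b \<Rightarrow> 'v \<times> 'b \<Rightarrow> bool" where
  "glued E b F p q \<longleftrightarrow> p = q \<or>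
     (\<exists>t s. t \<in> F \<and> s \<in> F \<and> E t s \<and> p = (t, b t s) \<and> q = (s, b s t))"

definition wcls :: "('v \<Rightarrow> 'v \<Rightarrow> bool) \<Rightarrow> ('v \<Rightarrow> 'b topology) \<Rightarrow> ('v \<Rightarrow> 'v \<Rightarrow> 'b) \<Rightarrow> 'v set
    \<Rightarrow> 'v \<times> 'b \<Rightarrow> ('v \<times> 'b) set" where
  "wcls E XX b F p = {q \<in> topspace (sum_topology XX F). glued E b F p q}"

definition wedgeF :: "('v \<Rightarrow> 'v \<Rightarrow> bool) \<Rightarrow> ('v \<Rightarrow> 'b topology) \<Rightarrow> ('v \<Rightarrow> 'v \<Rightarrow> 'b) \<Rightarrow> 'v set
    \<Rightarrow> ('v \<times> 'b) set topology" where
  "wedgeF E XX b F = quotient_topology (sum_topology XX F) (wcls E XX b F)"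

text \<open>toward E F' s t t': t is the vertex of F' nearest to s (s not in F') and t' is the
  neighbour of t on the path from t to s.\<close>
definition toward :: "('v \<Rightarrow> 'v \<Rightarrow> bool) \<Rightarrow> 'v set \<Rightarrow> 'v \<Rightarrow> 'v \<Rightarrow> 'v \<Rightarrow> bool" where
  "toward E F' s t t' \<longleftrightarrow> t \<in> F' \<and>
     (\<exists>rest. walk E (t # t' # rest) \<and> distinct (t # t' # rest) \<and>
             last (t # t' # rest) = s \<and> set (t' # rest) \<inter> F' = {})"

definition rhoR :: "('v \<Rightarrow> 'v \<Rightarrow> bool) \<Rightarrow> ('v \<Rightarrow> 'b topology) \<Rightarrow> ('v \<Rightarrow> 'v \<Rightarrow> 'b) \<Rightarrow> 'v set
    \<Rightarrow> 'v \<times> 'b \<Rightarrow> ('v \<times> 'b) set" where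
  "rhoR E XX b F' p =
     (if fst p \<in> F' then wcls E XX b F' p
      else (let (t, t') = (SOME (t, t'). toward E F' (fst p) t t') in wcls E XX b F' (t, b t t')))"

text \<open>The bonding map rho_{F,F'} : wedge_F \<rightarrow> wedge_F', computed on a representative.\<close>
definition rho :: "('v \<Rightarrow> 'v \<Rightarrow> bool) \<Rightarrow> ('v \<Rightarrow> 'b topology) \<Rightarrow> ('v \<Rightarrow> 'v \<Rightarrow> 'b) \<Rightarrow> 'v set
    \<Rightarrow> ('v \<times> 'b) set \<Rightarrow> ('v \<times> 'b) set" where
  "rho E XX b F' c = rhoR E XX b F' (SOME p. p \<in> c)"

definition wedge :: "'v set \<Rightarrow> ('v \<Rightarrow> 'v \<Rightarrow> bool) \<Rightarrow> ('v \<Rightarrow> 'b topology) \<Rightarrow> ('v \<Rightarrow> 'v \<Rightarrow> 'b)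
    \<Rightarrow> ('v set \<Rightarrow> ('v \<times> 'b) set) topology" where
  "wedge V E XX b =
     subtopology (product_topology (wedgeF E XX b) {F. fsubtree V E F})
       {x \<in> topspace (product_topology (wedgeF E XX b) {F. fsubtree V E F}).
          \<forall>F F'. fsubtree V E F \<and> fsubtree V E F' \<and> F' \<subseteq> F \<longrightarrow> rho E XX b F' (x F) = x F'}"

text \<open>p_{|e|} for e = [t,t']: the point of the wedge whose coordinate in every finite subtree
  containing e is the class of b_t([t,t']) (= class of b_{t'}([t',t])).\<close>
definition wedge_points :: "'v set \<Rightarrow> ('v \<Rightarrow> 'v \<Rightarrow> bool) \<Rightarrow> ('v \<Rightarrow> 'b topology) \<Rightarrow> ('v \<Rightarrow> 'v \<Rightarrow> 'b)
    \<Rightarrow> ('v set \<Rightarrow> ('v \<times> 'b) set) set" where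
  "wedge_points V E XX b =
     {x \<in> topspace (wedge V E XX b). \<exists>t t'. t \<in> V \<and> E t t' \<and>
        (\<forall>F. fsubtree V E F \<and> t \<in> F \<and> t' \<in> F \<longrightarrow> x F = wcls E XX b F (t, b t t'))}"

end

theory Submission
  imports Defs
begin

text \<open>A point p of the set P_Theta comes from an edge [t,t'], and its coordinate in the
  one-edge subtree {t,t'} is the class c of the glued pair b_t([t,t']) \<sim> b_{t'}([t',t]).
  Both points are isolated in their peripheral extensions and only finitely many points are
  glued in a finite wedge, so {c} is open there. A thread x with x_{t,t'} = c is forced by the
  bonding maps to take the value c in every larger finite subtree, because any point retracting
  onto c from outside {t,t'} would have to enter {t,t'} through a new edge at t or t', and such
  edges have peripheral points different from b_t([t,t']) and b_{t'}([t',t]). Hence the basic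
  open set of threads with coordinate c at {t,t'} is {p}.

  The rest is the compactness and metrizability of the wedge: each finite wedge is a compact
  quotient of a finite disjoint union that injects continuously into a metrizable product, and
  the inverse limit over the countably many finite subtrees is a closed subspace of their
  product.\<close>

section \<open>Quotient topologies, disjoint unions and isolated points\<close>

lemma openin_quotient_topology:
  "openin (quotient_topology X f) U \<longleftrightarrow>
     U \<subseteq> f ` topspace X \<and> openin X {x \<in> topspace X. f x \<in> U}"
proof -
  have inter: "{x \<in> topspace X. f x \<in> S \<inter> T} = {x \<in> topspace X. f x \<in> S} \<inter> {x \<in> topspace X. f x \<in> T}"
    for S T by auto
  have union: "{x \<in> topspace X. f x \<in> \<Union>K} = (\<Union>U\<in>K. {x \<in> topspace X. f x \<in> U})" for K
    by auto
  have "istopology (\<lambda>U. U \<subseteq> f ` topspace X \<and> openin X {x \<in> topspace X. f x \<in> U})"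
    unfolding istopology_def inter union by auto
  then show ?thesis
    unfolding quotient_topology_def by simp
qed

lemma topspace_quotient_topology [simp]:
  "topspace (quotient_topology X f) = f ` topspace X"
proof -
  have "{x \<in> topspace X. f x \<in> f ` topspace X} = topspace X" by auto
  then have "openin (quotient_topology X f) (f ` topspace X)"
    by (simp add: openin_quotient_topology)
  then show ?thesis
    by (meson openin_quotient_topology openin_subset openin_topspace subset_antisym)
qed

lemma quotient_map_quotient_topology: "quotient_map X (quotient_topology X f) f"
  unfolding quotient_map_def by (auto simp: openin_quotient_topology)

lemma openin_of_isolated_points:
  assumes "\<And>x. x \<in> S \<Longrightarrow> openin X {x}"
  shows "openin X S"
proof -
  have "S = \<Union>((\<lambda>x. {x}) ` S)" by auto
  also have "openin X \<dots>" using assms by (intro openin_Union) auto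
  finally show ?thesis .
qed

lemma continuous_map_sum_topologyI:
  assumes "\<And>i. i \<in> I \<Longrightarrow> continuous_map (X i) Y (\<lambda>x. f (i, x))"
  shows "continuous_map (sum_topology X I) Y f"
  unfolding continuous_map_def
proof (intro conjI allI impI)
  show "f \<in> topspace (sum_topology X I) \<rightarrow> topspace Y"
    using assms by (force simp: continuous_map_def)
  fix U assume U: "openin Y U"
  show "openin (sum_topology X I) {x \<in> topspace (sum_topology X I). f x \<in> U}"
    unfolding openin_sum_topology
  proof (intro conjI ballI)
    fix i assume i: "i \<in> I"
    have "{x. (i, x) \<in> {x \<in> topspace (sum_topology X I). f x \<in> U}} = {x \<in> topspace (X i). f (i, x) \<in> U}"
      using i by auto
    then show "openin (X i) {x. (i, x) \<in> {x \<in> topspace (sum_topology X I). f x \<in> U}}"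
      using assms[OF i] U by (simp add: continuous_map_def)
  qed auto
qed

lemma compact_space_sum_topology_finite:
  assumes "finite I" "\<And>i. i \<in> I \<Longrightarrow> compact_space (X i)"
  shows "compact_space (sum_topology X I)"
proof -
  have "topspace (sum_topology X I) = (\<Union>i\<in>I. Pair i ` topspace (X i))"
    by auto
  moreover have "compactin (sum_topology X I) (\<Union>i\<in>I. Pair i ` topspace (X i))"
  proof (rule compactin_Union)
    fix S assume "S \<in> (\<lambda>i. Pair i ` topspace (X i)) ` I"
    then obtain i where i: "i \<in> I" and S: "S = Pair i ` topspace (X i)" by auto
    show "compactin (sum_topology X I) S"
      unfolding S using assms(2)[OF i]
      by (intro image_compactin[OF _ continuous_map_component_injection[OF i]])
         (simp add: compact_space_def)
  qed (use assms(1) in simp)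
  ultimately show ?thesis by (simp add: compact_space_def)
qed

lemma continuous_map_eq_off_isolated:
  assumes f: "continuous_map S Y f"
    and iso: "\<And>d. d \<in> D \<Longrightarrow> openin S {d}"
    and op: "openin S (topspace S - D)"
    and eq: "\<And>x. x \<in> topspace S - D \<Longrightarrow> g x = f x"
    and im: "g ` topspace S \<subseteq> topspace Y"
  shows "continuous_map S Y g"
  unfolding continuous_map_def
proof (intro conjI allI impI)
  show "g \<in> topspace S \<rightarrow> topspace Y" using im by auto
  fix U assume U: "openin Y U"
  have "{x \<in> topspace S. g x \<in> U} =
     ({x \<in> topspace S. f x \<in> U} \<inter> (topspace S - D)) \<union> {d \<in> D \<inter> topspace S. g d \<in> U}"
    using eq by auto
  moreover have "openin S ({x \<in> topspace S. f x \<in> U} \<inter> (topspace S - D))"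
    using f U op by (auto simp: continuous_map_def)
  moreover have "openin S {d \<in> D \<inter> topspace S. g d \<in> U}"
    by (rule openin_of_isolated_points) (use iso in blast)
  ultimately show "openin S {x \<in> topspace S. g x \<in> U}" by (simp add: openin_Un)
qed

lemma metrizable_space_inj_continuous_map:
  assumes "compact_space X" "metrizable_space Y"
    and "continuous_map X Y f" "inj_on f (topspace X)"
  shows "metrizable_space X"
proof -
  have "embedding_map X Y f"
    using assms by (intro continuous_imp_embedding_map metrizable_imp_Hausdorff_space)
  then have "X homeomorphic_space subtopology Y (f ` topspace X)"
    by (rule embedding_map_imp_homeomorphic_space)
  then show ?thesis
    using homeomorphic_metrizable_space metrizable_space_subtopology[OF assms(2)] by blast
qed

lemma walk_Cons: "walk E (x # xs) \<longleftrightarrow> xs = [] \<or> E x (hd xs) \<and> walk E xs"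
  by (cases xs) (auto simp: walk_def)

lemma walk_snoc: "walk E xs \<Longrightarrow> E (last xs) y \<Longrightarrow> walk E (xs @ [y])"
  by (auto simp: walk_def successively_append_iff)

lemma walk_imp_distinct_walk:
  assumes "walk E xs"
  shows "\<exists>ys. walk E ys \<and> distinct ys \<and> hd ys = hd xs \<and> last ys = last xs \<and> set ys \<subseteq> set xs"
  using assms
proof (induction "length xs" arbitrary: xs rule: less_induct)
  case less
  show ?case
  proof (cases "distinct xs")
    case True then show ?thesis using less.prems by blast
  next
    case False
    then obtain as ys zs y where xs: "xs = as @ [y] @ ys @ [y] @ zs"
      using not_distinct_decomp by blast
    let ?w = "as @ [y] @ zs"
    have "walk E ?w"
      using less.prems unfolding xs walk_def
      by (auto simp: successively_append_iff successively_Cons split: if_splits)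
    moreover have "length ?w < length xs" using xs by simp
    ultimately obtain ws where "walk E ws \<and> distinct ws \<and> hd ws = hd ?w \<and> last ws = last ?w \<and> set ws \<subseteq> set ?w"
      using less.hyps by blast
    moreover have "hd ?w = hd xs" using xs by (cases as) auto
    moreover have "last ?w = last xs" using xs by (cases "zs = []") auto
    moreover have "set ?w \<subseteq> set xs" using xs by auto
    ultimately show ?thesis by auto
  qed
qed

definition walk_connected :: "('v \<Rightarrow> 'v \<Rightarrow> bool) \<Rightarrow> 'v set \<Rightarrow> bool" where
  "walk_connected E S \<longleftrightarrow>
     (\<forall>u\<in>S. \<forall>v\<in>S. \<exists>xs. walk E xs \<and> hd xs = u \<and> last xs = v \<and> set xs \<subseteq> S)"

lemma fsubtree_iff_walk_connected:
  "fsubtree V E F \<longleftrightarrow> F \<subseteq> V \<and> finite F \<and> F \<noteq> {} \<and> walk_connected E F"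
  by (simp add: fsubtree_def walk_connected_def)

lemma walk_connected_singleton: "walk_connected E {x}"
  unfolding walk_connected_def by (auto intro!: exI[of _ "[x]"] simp: walk_def)

lemma walk_connected_insert:
  assumes c: "walk_connected E S" and z: "z \<in> S" and e: "E z y" "E y z"
  shows "walk_connected E (insert y S)"
  unfolding walk_connected_def
proof (intro ballI)
  fix u v assume u: "u \<in> insert y S" and v: "v \<in> insert y S"
  have into_S: "\<exists>xs. walk E xs \<and> hd xs = y \<and> last xs = w \<and> set xs \<subseteq> insert y S" if "w \<in> S" for w
  proof -
    obtain xs where xs: "walk E xs" "hd xs = z" "last xs = w" "set xs \<subseteq> S"
      using c z \<open>w \<in> S\<close> unfolding walk_connected_def by blast
    then have "xs \<noteq> []" by (auto simp: walk_def)
    then show ?thesis using xs e by (intro exI[of _ "y # xs"]) (auto simp: walk_Cons)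
  qed
  have from_S: "\<exists>xs. walk E xs \<and> hd xs = w \<and> last xs = y \<and> set xs \<subseteq> insert y S" if "w \<in> S" for w
  proof -
    obtain xs where xs: "walk E xs" "hd xs = w" "last xs = z" "set xs \<subseteq> S"
      using c z \<open>w \<in> S\<close> unfolding walk_connected_def by blast
    then have "xs \<noteq> []" by (auto simp: walk_def)
    then show ?thesis using xs e by (intro exI[of _ "xs @ [y]"]) (auto simp: walk_snoc)
  qed
  show "\<exists>xs. walk E xs \<and> hd xs = u \<and> last xs = v \<and> set xs \<subseteq> insert y S"
  proof (cases "u = y")
    case uy: True
    show ?thesis
    proof (cases "v = y")
      case True
      then show ?thesis using uy by (intro exI[of _ "[y]"]) (auto simp: walk_def)
    qed (use uy v into_S in auto)
  next
    case False
    then have uS: "u \<in> S" using u by auto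
    show ?thesis
    proof (cases "v = y")
      case True
      then show ?thesis using from_S uS by auto
    next
      case False
      then obtain xs where "walk E xs" "hd xs = u" "last xs = v" "set xs \<subseteq> S"
        using c uS v unfolding walk_connected_def by blast
      then show ?thesis by blast
    qed
  qed
qed

lemma walk_connected_Un_walk:
  assumes "symp E" "walk E w" "walk_connected E S" "hd w \<in> S"
  shows "walk_connected E (S \<union> set w)"
  using assms(2-)
proof (induction w arbitrary: S)
  case Nil then show ?case by (simp add: walk_def)
next
  case (Cons a w)
  show ?case
  proof (cases "w = []")
    case True then show ?thesis using Cons by (simp add: insert_absorb)
  next
    case False
    then have e: "E a (hd w)" and "walk E w" using Cons.prems by (auto simp: walk_Cons)
    moreover have "walk_connected E (insert (hd w) S)"
      using walk_connected_insert[OF Cons.prems(2) _ e sympD[OF assms(1) e]] Cons.prems(3)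
      by simp
    ultimately have "walk_connected E (insert (hd w) S \<union> set w)"
      using Cons.IH[of "insert (hd w) S"] by simp
    moreover have "insert (hd w) S \<union> set w = S \<union> set (a # w)"
      using False Cons.prems(3) by (auto simp: hd_in_set)
    ultimately show ?thesis by simp
  qed
qed

locale tree_system =
  fixes V :: "'v set" and E :: "'v \<Rightarrow> 'v \<Rightarrow> bool" and X :: "'a topology"
    and XX :: "'v \<Rightarrow> 'b topology" and P :: "'v \<Rightarrow> 'b set" and b :: "'v \<Rightarrow> 'v \<Rightarrow> 'b"
  assumes complete: "complete_tree_system V E X XX P b"
begin

lemma tree: "is_tree V E"
  using complete by (simp add: complete_tree_system_def infinite_valence_tree_def)

lemma countable_V: "countable V"
  using complete by (simp add: complete_tree_system_def infinite_valence_tree_def)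

lemma symp_E: "symp E"
  using tree by (auto simp: is_tree_def intro: sympI)

lemma E_sym: "E x y \<Longrightarrow> E y x"
  using symp_E by (rule sympD)

lemma E_in_V: "E x y \<Longrightarrow> x \<in> V \<and> y \<in> V"
  using tree by (simp add: is_tree_def)

lemma tree_walk: "u \<in> V \<Longrightarrow> v \<in> V \<Longrightarrow> \<exists>xs. walk E xs \<and> hd xs = u \<and> last xs = v"
  using tree by (simp add: is_tree_def)

lemma walk_in_V: "walk E xs \<Longrightarrow> hd xs \<in> V \<Longrightarrow> set xs \<subseteq> V"
  by (induction xs) (use E_in_V in \<open>auto simp: walk_Cons\<close>)

lemma peripheral_extension: "t \<in> V \<Longrightarrow> peripheral_extension X (XX t) (P t)"
  using complete by (simp add: complete_tree_system_def)

lemma compact_XX: "t \<in> V \<Longrightarrow> compact_space (XX t)"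
  using peripheral_extension by (simp add: peripheral_extension_def)

lemma metrizable_XX: "t \<in> V \<Longrightarrow> metrizable_space (XX t)"
  using peripheral_extension by (simp add: peripheral_extension_def)

lemma topspace_XX_nonempty: "t \<in> V \<Longrightarrow> topspace (XX t) \<noteq> {}"
  using peripheral_extension[of t] by (auto simp: peripheral_extension_def)

lemma openin_XX_peripheral_point:
  assumes "t \<in> V" "y \<in> P t"
  shows "openin (XX t) {y}"
proof -
  have d: "subtopology (XX t) (P t) = discrete_topology (P t)" and o: "openin (XX t) (P t)"
    using peripheral_extension[OF assms(1)] by (auto simp: peripheral_extension_def)
  then obtain U where "openin (XX t) U" "{y} = U \<inter> P t"
    using assms(2) by (metis discrete_topology_unique empty_subsetI insert_subset openin_subtopology)
  then show ?thesis using o by (metis openin_Int)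
qed

lemma b_in_P: "E t s \<Longrightarrow> b t s \<in> P t"
  using complete E_in_V[of t s] by (auto simp: complete_tree_system_def bij_betw_def)

lemma b_in_topspace: "E t s \<Longrightarrow> b t s \<in> topspace (XX t)"
  using b_in_P E_in_V peripheral_extension by (fastforce simp: peripheral_extension_def)

lemma b_inj: "E t s \<Longrightarrow> E t s' \<Longrightarrow> b t s = b t s' \<Longrightarrow> s = s'"
  using complete E_in_V[of t s] by (auto simp: complete_tree_system_def bij_betw_def inj_on_def)

lemma openin_XX_b: "E t s \<Longrightarrow> openin (XX t) {b t s}"
  using openin_XX_peripheral_point b_in_P E_in_V by blast

lemma fsubtree_edge:
  assumes e: "E t t'"
  shows "fsubtree V E {t, t'}"
proof -
  have "walk_connected E (insert t' {t})"
    using walk_connected_insert[of E "{t}" t t'] walk_connected_singleton[of E t] e E_sym[OF e] by simp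
  then show ?thesis
    using E_in_V[OF e] by (simp add: fsubtree_iff_walk_connected insert_commute)
qed

lemma fsubtree_extend_edge:
  assumes F: "fsubtree V E F" and e: "E t t'"
  obtains G where "fsubtree V E G" "F \<subseteq> G" "t \<in> G" "t' \<in> G"
proof -
  obtain u where u: "u \<in> F" and uV: "u \<in> V" using F by (auto simp: fsubtree_def)
  obtain w where w: "walk E w" "hd w = u" "last w = t"
    using tree_walk[OF uV] E_in_V[OF e] by blast
  have "walk_connected E (F \<union> set w)"
    using walk_connected_Un_walk[OF symp_E w(1)] F u w(2) by (auto simp: fsubtree_iff_walk_connected)
  moreover have tw: "t \<in> set w" using w by (metis last_in_set walk_def)
  ultimately have "walk_connected E (insert t' (F \<union> set w))"
    using walk_connected_insert[of E "F \<union> set w" t t'] e E_sym[OF e] by blast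
  moreover have "set w \<subseteq> V" using walk_in_V[OF w(1)] w(2) uV by simp
  ultimately have "fsubtree V E (insert t' (F \<union> set w))"
    using F E_in_V[OF e] by (auto simp: fsubtree_iff_walk_connected)
  then show ?thesis using that tw by blast
qed

lemma toward_exists:
  assumes F': "F' \<noteq> {}" "F' \<subseteq> V" and s: "s \<in> V" "s \<notin> F'"
  shows "\<exists>t t'. toward E F' s t t'"
proof -
  obtain u where u: "u \<in> F'" using F' by auto
  obtain xs where xs: "walk E xs" "hd xs = u" "last xs = s"
    using tree_walk[of u s] u F' s by blast
  obtain ys where ys: "walk E ys" "distinct ys" "hd ys = u" "last ys = s"
    using walk_imp_distinct_walk[OF xs(1)] xs by auto
  have "ys \<noteq> []" using ys by (auto simp: walk_def)
  then have "\<exists>x\<in>set ys. x \<in> F'" using ys(3) u hd_in_set by blast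
  then obtain as t cs where split: "ys = as @ t # cs" "t \<in> F'" "\<forall>z\<in>set cs. z \<notin> F'"
    using split_list_last_prop[of ys "\<lambda>x. x \<in> F'"] by blast
  have "cs \<noteq> []" using split ys(4) s(2) by auto
  then obtain t' rest where cs: "cs = t' # rest" by (cases cs) auto
  have "walk E (t # t' # rest)"
    using ys(1) unfolding split cs walk_def by (simp add: successively_append_iff)
  moreover have "distinct (t # t' # rest)" using ys(2) split cs by simp
  moreover have "last (t # t' # rest) = s" using ys(4) split cs by simp
  moreover have "set (t' # rest) \<inter> F' = {}" using split cs by auto
  ultimately show ?thesis using split(2) unfolding toward_def by blast
qed

lemma toward_imp_exit_edge:
  assumes "toward E F' s t t'"
  shows "t \<in> F' \<and> E t t' \<and> t' \<notin> F'"
proof -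
  obtain rest where "t \<in> F'" "walk E (t # t' # rest)" "set (t' # rest) \<inter> F' = {}"
    using assms unfolding toward_def by blast
  then show ?thesis by (auto simp: walk_def)
qed

section \<open>Finite wedges\<close>

abbreviation "sumXX F \<equiv> sum_topology XX F"
abbreviation "wedgeXX F \<equiv> wedgeF E XX b F"
abbreviation "cls F \<equiv> wcls E XX b F"

definition gluing_points :: "'v set \<Rightarrow> ('v \<times> 'b) set" where
  "gluing_points F = {(t, b t s) | t s. t \<in> F \<and> s \<in> F \<and> E t s}"

lemma glued_sym: "glued E b F p q \<Longrightarrow> glued E b F q p"
  unfolding glued_def using E_sym by blast

lemma glued_trans:
  assumes pq: "glued E b F p q" and qr: "glued E b F q r"
  shows "glued E b F p r"
proof (cases "p = q \<or> q = r")
  case True then show ?thesis using pq qr by auto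
next
  case False
  then obtain t s where ts: "E t s" "p = (t, b t s)" "q = (s, b s t)"
    using pq by (auto simp: glued_def)
  obtain s' t' where ts': "E s t'" "q = (s', b s' t')" "r = (t', b t' s')"
    using qr False ts by (auto simp: glued_def)
  then have "t' = t" using b_inj[of s t t'] ts E_sym by auto
  then show ?thesis using ts ts' by (simp add: glued_def)
qed

lemma glued_mono: "glued E b F p q \<Longrightarrow> F \<subseteq> G \<Longrightarrow> glued E b G p q"
  unfolding glued_def by blast

lemma wcls_self: "q \<in> topspace (sumXX F) \<Longrightarrow> q \<in> cls F q"
  by (simp add: wcls_def glued_def)

lemma wcls_subset: "cls F q \<subseteq> topspace (sumXX F)"
  by (auto simp: wcls_def)

lemma wcls_eqI: "q' \<in> cls F q \<Longrightarrow> cls F q' = cls F q"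
  unfolding wcls_def using glued_sym glued_trans by blast

lemma wcls_some_in: "q \<in> topspace (sumXX F) \<Longrightarrow> (SOME q'. q' \<in> cls F q) \<in> cls F q"
  using wcls_self by (rule someI)

lemma wcls_singleton: "q \<notin> gluing_points F \<Longrightarrow> q \<in> topspace (sumXX F) \<Longrightarrow> cls F q = {q}"
  unfolding wcls_def glued_def gluing_points_def by auto

lemma wcls_subset_gluing_points: "q \<in> gluing_points F \<Longrightarrow> cls F q \<subseteq> gluing_points F"
  unfolding wcls_def glued_def gluing_points_def using E_sym by blast

lemma finite_gluing_points: "finite F \<Longrightarrow> finite (gluing_points F)"
proof -
  assume "finite F"
  moreover have "gluing_points F \<subseteq> (\<lambda>(t, s). (t, b t s)) ` (F \<times> F)"
    unfolding gluing_points_def by auto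
  ultimately show ?thesis by (meson finite_SigmaI finite_imageI finite_subset)
qed

lemma gluing_points_subset: "gluing_points F \<subseteq> topspace (sumXX F)"
  unfolding gluing_points_def using b_in_topspace by auto

lemma openin_gluing_point:
  assumes "d \<in> gluing_points F"
  shows "openin (sumXX F) {d}"
proof -
  obtain t s where ts: "t \<in> F" "E t s" "d = (t, b t s)"
    using assms unfolding gluing_points_def by auto
  have "{x. (i, x) \<in> {d}} = (if i = t then {b t s} else {})" for i
    using ts by auto
  then show ?thesis
    unfolding openin_sum_topology using ts b_in_topspace openin_XX_b by auto
qed

lemma openin_compl_gluing_points:
  assumes F: "finite F" "F \<subseteq> V"
  shows "openin (sumXX F) (topspace (sumXX F) - gluing_points F)"
  unfolding openin_sum_topology
proof (intro conjI ballI)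
  fix i assume i: "i \<in> F"
  let ?G = "{x. (i, x) \<in> gluing_points F}"
  have "?G = snd ` (gluing_points F \<inter> {p. fst p = i})" by force
  then have "finite ?G" using finite_gluing_points[OF F(1)] by simp
  moreover have "?G \<subseteq> topspace (XX i)"
    using gluing_points_subset[of F] i by force
  ultimately have "closedin (XX i) ?G"
    using metrizable_imp_t1_space[OF metrizable_XX] i F(2) by (meson subsetD t1_space_closedin_finite)
  then have "openin (XX i) (topspace (XX i) - ?G)"
    by (simp add: openin_diff)
  moreover have "{x. (i, x) \<in> topspace (sumXX F) - gluing_points F} = topspace (XX i) - ?G"
    using i by auto
  ultimately show "openin (XX i) {x. (i, x) \<in> topspace (sumXX F) - gluing_points F}" by simp
qed auto

lemma quotient_map_wcls: "quotient_map (sumXX F) (wedgeXX F) (cls F)"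
  unfolding wedgeF_def by (rule quotient_map_quotient_topology)

lemma continuous_wcls: "continuous_map (sumXX F) (wedgeXX F) (cls F)"
  by (rule quotient_imp_continuous_map[OF quotient_map_wcls])

lemma topspace_wedgeF: "topspace (wedgeXX F) = cls F ` topspace (sumXX F)"
  unfolding wedgeF_def by simp

lemma openin_wedgeF_gluing_class:
  assumes "q \<in> gluing_points F"
  shows "openin (wedgeXX F) {cls F q}"
  unfolding wedgeF_def openin_quotient_topology
proof
  have q: "q \<in> topspace (sumXX F)" using assms gluing_points_subset by blast
  then show "{cls F q} \<subseteq> cls F ` topspace (sumXX F)" by auto
  have "{q' \<in> topspace (sumXX F). cls F q' \<in> {cls F q}} = cls F q"
    using wcls_self wcls_eqI wcls_subset by blast
  moreover have "openin (sumXX F) (cls F q)"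
    by (rule openin_of_isolated_points)
       (use wcls_subset_gluing_points[OF assms] openin_gluing_point in blast)
  ultimately show "openin (sumXX F) {q' \<in> topspace (sumXX F). cls F q' \<in> {cls F q}}" by simp
qed

lemma compact_wedgeF:
  assumes "fsubtree V E F"
  shows "compact_space (wedgeXX F)"
proof -
  have "compact_space (sumXX F)"
    using assms by (intro compact_space_sum_topology_finite) (auto simp: fsubtree_def compact_XX)
  then have "compactin (wedgeXX F) (cls F ` topspace (sumXX F))"
    unfolding compact_space_def by (rule image_compactin[OF _ continuous_wcls])
  then show ?thesis by (simp add: compact_space_def topspace_wedgeF)
qed

text \<open>Classes with more than one point consist of isolated points, so the choice of
  representative does not affect continuity.\<close>
lemma continuous_map_wedgeF_representative:
  assumes F: "fsubtree V E F" and h: "continuous_map (sumXX F) Y h"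
  shows "continuous_map (wedgeXX F) Y (\<lambda>c. h (SOME q. q \<in> c))"
proof (rule continuous_compose_quotient_map[OF quotient_map_wcls])
  show "continuous_map (sumXX F) Y ((\<lambda>c. h (SOME q. q \<in> c)) \<circ> cls F)"
  proof (rule continuous_map_eq_off_isolated[OF h openin_gluing_point])
    show "openin (sumXX F) (topspace (sumXX F) - gluing_points F)"
      using F by (intro openin_compl_gluing_points) (auto simp: fsubtree_def)
    show "((\<lambda>c. h (SOME q. q \<in> c)) \<circ> cls F) x = h x"
      if "x \<in> topspace (sumXX F) - gluing_points F" for x
      using that wcls_singleton[of x F] by simp
    have "h (SOME q'. q' \<in> cls F q) \<in> topspace Y" if "q \<in> topspace (sumXX F)" for q
      using wcls_some_in[OF that] wcls_subset h by (blast dest: continuous_map_image_subset_topspace)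
    then show "((\<lambda>c. h (SOME q. q \<in> c)) \<circ> cls F) ` topspace (sumXX F) \<subseteq> topspace Y"
      by auto
  qed
qed

lemma rhoR_inside: "s \<in> F' \<Longrightarrow> rhoR E XX b F' (s, y) = cls F' (s, y)"
  by (simp add: rhoR_def)

lemma rhoR_outside:
  assumes "F' \<noteq> {}" "F' \<subseteq> V" "s \<in> V" "s \<notin> F'"
  obtains t t' where "toward E F' s t t'" "\<And>y. rhoR E XX b F' (s, y) = cls F' (t, b t t')"
proof -
  let ?c = "SOME (t, t'). toward E F' s t t'"
  have "\<exists>c. (\<lambda>(t, t'). toward E F' s t t') c"
    using toward_exists[OF assms] by auto
  then have "(\<lambda>(t, t'). toward E F' s t t') ?c" by (rule someI_ex)
  then have "toward E F' s (fst ?c) (snd ?c)" by (simp add: case_prod_beta)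
  moreover have "rhoR E XX b F' (s, y) = cls F' (fst ?c, b (fst ?c) (snd ?c))" for y
    using assms(4) unfolding rhoR_def by (simp add: Let_def case_prod_beta)
  ultimately show ?thesis using that by blast
qed

lemma continuous_rhoR:
  assumes F: "fsubtree V E F" and F': "fsubtree V E F'"
  shows "continuous_map (sumXX F) (wedgeXX F') (rhoR E XX b F')"
proof (rule continuous_map_sum_topologyI)
  fix s assume s: "s \<in> F"
  show "continuous_map (XX s) (wedgeXX F') (\<lambda>y. rhoR E XX b F' (s, y))"
  proof (cases "s \<in> F'")
    case True
    have "continuous_map (XX s) (wedgeXX F') (cls F' \<circ> Pair s)"
      by (rule continuous_map_compose[OF continuous_map_component_injection[OF True] continuous_wcls])
    then show ?thesis using rhoR_inside[OF True] by (simp add: o_def)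
  next
    case False
    have "F' \<noteq> {}" "F' \<subseteq> V" "s \<in> V" using F F' s by (auto simp: fsubtree_def)
    then obtain t t' where tw: "toward E F' s t t'" and eq: "\<And>y. rhoR E XX b F' (s, y) = cls F' (t, b t t')"
      using rhoR_outside False by metis
    have "(t, b t t') \<in> topspace (sumXX F')" using toward_imp_exit_edge[OF tw] b_in_topspace by auto
    then show ?thesis unfolding eq by (simp add: topspace_wedgeF)
  qed
qed

lemma continuous_rho:
  assumes "fsubtree V E F" "fsubtree V E F'"
  shows "continuous_map (wedgeXX F) (wedgeXX F') (rho E XX b F')"
  unfolding rho_def[abs_def]
  using continuous_map_wedgeF_representative[OF assms(1) continuous_rhoR[OF assms]] .

definition base_point :: "'v \<Rightarrow> 'b" where
  "base_point s = (SOME y. y \<in> topspace (XX s))"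

lemma base_point_in_topspace: "s \<in> V \<Longrightarrow> base_point s \<in> topspace (XX s)"
  unfolding base_point_def using topspace_XX_nonempty[of s] by (simp add: some_in_eq)

text \<open>The real coordinate marks the summand a point comes from.\<close>
definition sum_embedding :: "'v set \<Rightarrow> 'v \<times> 'b \<Rightarrow> 'v \<Rightarrow> 'b \<times> real" where
  "sum_embedding F q = (\<lambda>s\<in>F. if s = fst q then (snd q, 1) else (base_point s, 0))"

abbreviation "embXX F \<equiv> product_topology (\<lambda>s. prod_topology (XX s) euclideanreal) F"

lemma continuous_sum_embedding:
  assumes F: "F \<subseteq> V"
  shows "continuous_map (sumXX F) (embXX F) (sum_embedding F)"
proof (rule continuous_map_sum_topologyI)
  fix t assume t: "t \<in> F"
  show "continuous_map (XX t) (embXX F) (\<lambda>x. sum_embedding F (t, x))"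
    unfolding continuous_map_componentwise
  proof (intro conjI ballI)
    show "(\<lambda>x. sum_embedding F (t, x)) ` topspace (XX t) \<subseteq> extensional F"
      by (auto simp: sum_embedding_def)
    fix k assume k: "k \<in> F"
    show "continuous_map (XX t) (prod_topology (XX k) euclideanreal) (\<lambda>x. sum_embedding F (t, x) k)"
    proof (cases "k = t")
      case True
      then show ?thesis using k by (simp add: sum_embedding_def continuous_map_pairwise o_def)
    next
      case False
      then show ?thesis
        using k F base_point_in_topspace[of k] by (auto simp: sum_embedding_def)
    qed
  qed
qed

lemma inj_on_sum_embedding: "inj_on (sum_embedding F) (topspace (sumXX F))"
proof (rule inj_onI)
  fix q1 q2 assume q1: "q1 \<in> topspace (sumXX F)" and q2: "q2 \<in> topspace (sumXX F)"
    and eq: "sum_embedding F q1 = sum_embedding F q2"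
  then have "sum_embedding F q1 (fst q1) = sum_embedding F q2 (fst q1)" by simp
  then show "q1 = q2"
    using q1 q2 by (auto simp: sum_embedding_def prod_eq_iff split: if_splits)
qed

lemma metrizable_embXX:
  assumes "finite F" "F \<subseteq> V"
  shows "metrizable_space (embXX F)"
  using assms metrizable_XX
  by (auto simp: metrizable_space_product_topology metrizable_space_prod_topology
      metrizable_space_euclidean countable_finite)

lemma metrizable_wedgeF:
  assumes F: "fsubtree V E F"
  shows "metrizable_space (wedgeXX F)"
proof -
  have fin: "finite F" "F \<subseteq> V" using F by (auto simp: fsubtree_def)
  let ?psi = "\<lambda>c. sum_embedding F (SOME q. q \<in> c)"
  have "inj_on ?psi (topspace (wedgeXX F))"
  proof (rule inj_onI)
    fix c1 c2 assume "c1 \<in> topspace (wedgeXX F)" "c2 \<in> topspace (wedgeXX F)" and eq: "?psi c1 = ?psi c2"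
    then obtain q1 q2 where q: "q1 \<in> topspace (sumXX F)" "c1 = cls F q1"
      "q2 \<in> topspace (sumXX F)" "c2 = cls F q2"
      unfolding topspace_wedgeF by blast
    let ?r1 = "SOME q'. q' \<in> cls F q1" and ?r2 = "SOME q'. q' \<in> cls F q2"
    have r: "?r1 \<in> cls F q1" "?r2 \<in> cls F q2" using wcls_some_in q by auto
    have "sum_embedding F ?r1 = sum_embedding F ?r2" using eq q by simp
    moreover have "?r1 \<in> topspace (sumXX F)" "?r2 \<in> topspace (sumXX F)"
      using r wcls_subset by blast+
    ultimately have "?r1 = ?r2" by (rule inj_onD[OF inj_on_sum_embedding])
    then show "c1 = c2" using wcls_eqI r q by metis
  qed
  then show ?thesis
    using metrizable_space_inj_continuous_map compact_wedgeF[OF F] metrizable_embXX[OF fin]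
      continuous_map_wedgeF_representative[OF F continuous_sum_embedding[OF fin(2)]] by blast
qed

section \<open>The wedge as an inverse limit\<close>

abbreviation "subtrees \<equiv> {F. fsubtree V E F}"
abbreviation "prodW \<equiv> product_topology (wedgeF E XX b) subtrees"
abbreviation "threads \<equiv> {x \<in> topspace prodW. \<forall>F F'. fsubtree V E F \<and> fsubtree V E F' \<and> F' \<subseteq> F
    \<longrightarrow> rho E XX b F' (x F) = x F'}"

lemma wedge_eq: "wedge V E XX b = subtopology prodW threads"
  by (simp add: wedge_def)

lemma topspace_wedge: "topspace (wedge V E XX b) = threads"
  unfolding wedge_eq by auto

lemma closedin_threads: "closedin prodW threads"
proof -
  let ?eq = "\<lambda>(F, F'). {x \<in> topspace prodW. rho E XX b F' (x F) = x F'}"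
  let ?pairs = "{(F, F'). fsubtree V E F \<and> fsubtree V E F' \<and> F' \<subseteq> F}"
  have closedin_eq: "closedin prodW (?eq (F, F'))" if "(F, F') \<in> ?pairs" for F F'
  proof -
    have F: "fsubtree V E F" and F': "fsubtree V E F'" using that by auto
    have "Hausdorff_space (wedgeXX F')"
      using metrizable_wedgeF[OF F'] by (rule metrizable_imp_Hausdorff_space)
    moreover have "continuous_map prodW (wedgeXX F') (\<lambda>x. rho E XX b F' (x F))"
      using continuous_map_compose[OF continuous_map_product_projection[of F subtrees "wedgeF E XX b"]
          continuous_rho[OF F F']] F
      by (simp add: o_def)
    moreover have "continuous_map prodW (wedgeXX F') (\<lambda>x. x F')"
      using F' by (simp add: continuous_map_product_projection)
    ultimately have "closedin prodW {x \<in> topspace prodW. rho E XX b F' (x F) = x F'}"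
      by (rule closedin_continuous_maps_eq)
    then show ?thesis by simp
  qed
  have "threads = \<Inter>(insert (topspace prodW) (?eq ` ?pairs))" by auto
  moreover have "closedin prodW (\<Inter>(insert (topspace prodW) (?eq ` ?pairs)))"
  proof (rule closedin_Inter)
    fix S assume "S \<in> insert (topspace prodW) (?eq ` ?pairs)"
    then consider "S = topspace prodW" | F F' where "(F, F') \<in> ?pairs" "S = ?eq (F, F')"
      by blast
    then show "closedin prodW S"
    proof cases
      case 1
      then show ?thesis by (simp only: closedin_topspace)
    next
      case 2
      then show ?thesis using closedin_eq by simp
    qed
  qed simp
  ultimately show ?thesis by simp
qed

lemma compact_wedge: "compact_space (wedge V E XX b)"
proof -
  have "compact_space prodW"
    using compact_wedgeF by (simp add: compact_space_product_topology)
  then show ?thesis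
    unfolding wedge_eq using closedin_threads closedin_compact_space compact_space_subtopology by blast
qed

lemma metrizable_wedge: "metrizable_space (wedge V E XX b)"
proof -
  have "countable {F. finite F \<and> F \<subseteq> V}" using countable_V by (rule countable_Collect_finite_subset)
  then have "countable subtrees" by (rule countable_subset[rotated]) (auto simp: fsubtree_def)
  then have "countable {F. fsubtree V E F \<and> (\<forall>a. \<not> topspace (wedgeXX F) \<subseteq> {a})}"
    by (rule countable_subset[rotated]) auto
  then have "metrizable_space prodW"
    using metrizable_wedgeF by (simp add: metrizable_space_product_topology)
  then show ?thesis unfolding wedge_eq by (rule metrizable_space_subtopology)
qed

text \<open>A point retracting onto {t,t'} from outside lands on the peripheral point of an edge
  leaving {t,t'}, which is glued to nothing in the wedge over {t,t'}.\<close>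
lemma wcls_exit_point_ne_edge_class:
  assumes e: "E t t'" and u: "u \<in> {t, t'}" "E u u'" "u' \<notin> {t, t'}"
  shows "cls {t, t'} (u, b u u') \<noteq> cls {t, t'} (t, b t t')"
proof
  assume "cls {t, t'} (u, b u u') = cls {t, t'} (t, b t t')"
  moreover have "(t, b t t') \<in> cls {t, t'} (t, b t t')"
    using e by (intro wcls_self) (auto intro: b_in_topspace)
  ultimately have "(t, b t t') \<in> cls {t, t'} (u, b u u')" by simp
  then have "glued E b {t, t'} (u, b u u') (t, b t t')" by (simp add: wcls_def)
  then obtain w where w: "w \<in> {t, t'}" "E u w" "b u u' = b u w"
    using e unfolding glued_def by auto
  then have "u' = w" using b_inj u(2) by blast
  then show False using u(3) w(1) by simp
qed

lemma wedge_coordinate_edge_class: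
  assumes e: "E t t'" and G: "fsubtree V E G" "t \<in> G" "t' \<in> G"
    and x: "x \<in> threads" and xc: "x {t, t'} = cls {t, t'} (t, b t t')"
  shows "x G = cls G (t, b t t')"
proof -
  let ?F0 = "{t, t'}"
  have F0: "fsubtree V E ?F0" using fsubtree_edge[OF e] .
  have "x G \<in> topspace (wedgeXX G)" using x G(1) by (auto simp: PiE_iff)
  then obtain q where q: "q \<in> topspace (sumXX G)" "x G = cls G q"
    unfolding topspace_wedgeF by blast
  define r where "r = (SOME r. r \<in> cls G q)"
  have r: "r \<in> cls G q" unfolding r_def using wcls_some_in[OF q(1)] .
  then have xr: "x G = cls G r" using wcls_eqI q(2) by simp
  have "rho E XX b ?F0 (x G) = x ?F0" using x G F0 by blast
  then have rc: "rhoR E XX b ?F0 r = cls ?F0 (t, b t t')" using xc q(2) by (simp add: rho_def r_def)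
  have rG: "r \<in> topspace (sumXX G)" using r wcls_subset by blast
  then obtain s y where sy: "r = (s, y)" "s \<in> G" "y \<in> topspace (XX s)" by auto
  show ?thesis
  proof (cases "s \<in> ?F0")
    case True
    have "(s, y) \<in> cls ?F0 (s, y)" using True sy by (intro wcls_self) auto
    then have "(s, y) \<in> cls ?F0 (t, b t t')"
      using rc sy rhoR_inside[OF True] by simp
    then have "glued E b ?F0 (t, b t t') (s, y)" by (simp add: wcls_def)
    then have "glued E b G (t, b t t') (s, y)" by (rule glued_mono) (use G in auto)
    then have "r \<in> cls G (t, b t t')" using sy rG by (simp add: wcls_def)
    then show ?thesis using xr wcls_eqI by simp
  next
    case False
    have "?F0 \<subseteq> V" using E_in_V[OF e] by simp
    moreover have "s \<in> V" using G(1) sy(2) by (auto simp: fsubtree_def)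
    ultimately obtain u u' where tw: "toward E ?F0 s u u'"
      and "\<And>y. rhoR E XX b ?F0 (s, y) = cls ?F0 (u, b u u')"
      by (rule rhoR_outside[OF insert_not_empty _ _ False]) blast
    then show ?thesis
      using rc sy wcls_exit_point_ne_edge_class[OF e] toward_imp_exit_edge[OF tw] by auto
  qed
qed

lemma openin_wedge_point:
  assumes p: "p \<in> wedge_points V E XX b"
  shows "openin (wedge V E XX b) {p}"
proof -
  obtain t t' where e: "E t t'"
    and pF: "\<And>F. fsubtree V E F \<Longrightarrow> t \<in> F \<Longrightarrow> t' \<in> F \<Longrightarrow> p F = cls F (t, b t t')"
    using p unfolding wedge_points_def by blast
  have p_thread: "p \<in> threads" using p unfolding wedge_points_def topspace_wedge by blast
  let ?F0 = "{t, t'}" let ?c = "cls {t, t'} (t, b t t')"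
  have F0: "fsubtree V E ?F0" using fsubtree_edge[OF e] .
  have "openin (wedgeXX ?F0) {?c}"
    using e by (intro openin_wedgeF_gluing_class) (auto simp: gluing_points_def)
  then have "openin prodW {x \<in> topspace prodW. x ?F0 \<in> {?c}}"
    using continuous_map_product_projection[of ?F0 subtrees "wedgeF E XX b"] F0
    unfolding continuous_map_def by auto
  then have "openin (wedge V E XX b) ({x \<in> topspace prodW. x ?F0 = ?c} \<inter> threads)"
    unfolding wedge_eq by (auto intro: openin_subtopology_Int)
  moreover have "{x \<in> topspace prodW. x ?F0 = ?c} \<inter> threads = {p}"
  proof (intro equalityI subsetI)
    fix x assume x: "x \<in> {x \<in> topspace prodW. x ?F0 = ?c} \<inter> threads"
    have "x F = p F" for F
    proof (cases "fsubtree V E F")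
      case False
      then show ?thesis using x p_thread by (auto simp: PiE_iff extensional_def)
    next
      case True
      then obtain G where G: "fsubtree V E G" "F \<subseteq> G" "t \<in> G" "t' \<in> G"
        using fsubtree_extend_edge e by blast
      have "x G = p G" using wedge_coordinate_edge_class[OF e G(1,3,4)] x pF[OF G(1,3,4)] by simp
      moreover have "rho E XX b F (x G) = x F" "rho E XX b F (p G) = p F"
        using x p_thread G True by blast+
      ultimately show ?thesis by simp
    qed
    then show "x \<in> {p}" by auto
  qed (use p_thread pF[OF F0] in auto)
  ultimately show ?thesis by simp
qed

end

theorem lemma1p4:
  fixes X :: "'a topology" and XX :: "'v \<Rightarrow> 'b topology" and P :: "'v \<Rightarrow> 'b set"
    and V :: "'v set" and E :: "'v \<Rightarrow> 'v \<Rightarrow> bool" and b :: "'v \<Rightarrow> 'v \<Rightarrow> 'b"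
  assumes "compact_space X" and "metrizable_space X" and "topspace X \<noteq> {}"
    and "complete_tree_system V E X XX P b"
  shows "(\<forall>p \<in> wedge_points V E XX b. openin (wedge V E XX b) {p})
    \<and> openin (wedge V E XX b) (wedge_points V E XX b)
    \<and> compact_space (subtopology (wedge V E XX b) (topspace (wedge V E XX b) - wedge_points V E XX b))
    \<and> metrizable_space (subtopology (wedge V E XX b) (topspace (wedge V E XX b) - wedge_points V E XX b))"
proof -
  interpret tree_system V E X XX P b using assms(4) by unfold_locales
  have isolated: "\<forall>p \<in> wedge_points V E XX b. openin (wedge V E XX b) {p}"
    using openin_wedge_point by blast
  have "openin (wedge V E XX b) (wedge_points V E XX b)"
    by (rule openin_of_isolated_points) (use isolated in blast)
  then have "closedin (wedge V E XX b) (topspace (wedge V E XX b) - wedge_points V E XX b)"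
    by (rule closedin_diff[OF closedin_topspace])
  then show ?thesis
    using isolated \<open>openin _ (wedge_points V E XX b)\<close> compact_wedge metrizable_wedge
    by (auto intro: closedin_compact_space compact_space_subtopology metrizable_space_subtopology)
qed

end
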